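(* For every $n\ge 5$, $v(C_n)=v(P_{n-3})+1$, where $C_n$ is the cycle on $n$ vertices and $P_{n-3}$ is the path on $n-3$ vertices.
   Context: Let $K$ be a field and $S$ a standard graded polynomial ring over $K$. For a proper graded ideal $I\subset S$, the $v$-number is $v(I)=\min\{k\ge 0 : \exists f\in S_k,\ \mathcal P\in\operatorname{Ass}(S/I) \text{ with } (I:f)=\mathcal P\}$. For a finite simple graph $G$ whose vertices are the variables of $S$, $I(G)$ is the edge ideal generated by $x_ix_j$ over edges $\{x_i,x_j\}$, and $v(G):=v(I(G))$. The path $P_m$ has vertices $x_1,\dots,x_m$ and edges $\{x_i,x_{i+1}\}$; the cycle $C_n$ has vertices $x_1,\dots,x_n$ and edges $\{x_i,x_{i+1}\}$ ($1\le i\le n-1$) and $\{x_n,x_1\}$. *)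

theory Defs
  imports Main "HOL-Library.Poly_Mapping"
begin

text \<open>Polynomials over a field 'a in variables x_i (i :: nat), represented as finitely
supported maps from monomials (exponent vectors) to coefficients.\<close>

type_synonym 'a mpoly = "(nat \<Rightarrow>\<^sub>0 nat) \<Rightarrow>\<^sub>0 'a"

definition Var :: "nat \<Rightarrow> 'a::field mpoly" where
  "Var i = Poly_Mapping.single (Poly_Mapping.single i 1) 1"

definition polyring :: "nat \<Rightarrow> 'a::field mpoly set" where
  "polyring n = {p :: 'a mpoly. \<forall>m \<in> Poly_Mapping.keys p. Poly_Mapping.keys m \<subseteq> {1..n}}"

definition mon_deg :: "(nat \<Rightarrow>\<^sub>0 nat) \<Rightarrow> nat" where
  "mon_deg m = (\<Sum>i\<in>Poly_Mapping.keys m. Poly_Mapping.lookup m i)"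

definition homog_comp :: "nat \<Rightarrow> nat \<Rightarrow> 'a::field mpoly set" where
  "homog_comp n k = {p \<in> polyring n. \<forall>m \<in> Poly_Mapping.keys p. mon_deg m = k}"

definition is_ideal :: "nat \<Rightarrow> 'a::field mpoly set \<Rightarrow> bool" where
  "is_ideal n J \<longleftrightarrow> J \<subseteq> polyring n \<and> 0 \<in> J \<and>
     (\<forall>a\<in>J. \<forall>b\<in>J. a + b \<in> J) \<and> (\<forall>r\<in>polyring n. \<forall>a\<in>J. r * a \<in> J)"

definition ideal_gen :: "nat \<Rightarrow> 'a::field mpoly set \<Rightarrow> 'a mpoly set" where
  "ideal_gen n G = \<Inter>{J. is_ideal n J \<and> G \<subseteq> J}"

definition prime_ideal :: "nat \<Rightarrow> 'a::field mpoly set \<Rightarrow> bool" where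
  "prime_ideal n P \<longleftrightarrow> is_ideal n P \<and> P \<noteq> polyring n \<and>
     (\<forall>a\<in>polyring n. \<forall>b\<in>polyring n. a * b \<in> P \<longrightarrow> a \<in> P \<or> b \<in> P)"

definition colon :: "nat \<Rightarrow> 'a::field mpoly set \<Rightarrow> 'a mpoly \<Rightarrow> 'a mpoly set" where
  "colon n I f = {g \<in> polyring n. g * f \<in> I}"

definition Ass :: "nat \<Rightarrow> 'a::field mpoly set \<Rightarrow> 'a mpoly set set" where
  "Ass n I = {P. prime_ideal n P \<and> (\<exists>f\<in>polyring n. colon n I f = P)}"

definition vnumber :: "nat \<Rightarrow> 'a::field mpoly set \<Rightarrow> nat" where
  "vnumber n I = (LEAST k. \<exists>f \<in> homog_comp n k. \<exists>P \<in> Ass n I. colon n I f = P)"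

definition edge_ideal :: "nat \<Rightarrow> (nat \<times> nat) set \<Rightarrow> 'a::field mpoly set" where
  "edge_ideal n E = ideal_gen n {Var i * Var j | i j. (i, j) \<in> E}"

definition path_edges :: "nat \<Rightarrow> (nat \<times> nat) set" where
  "path_edges m = {(i, i + 1) | i. 1 \<le> i \<and> i + 1 \<le> m}"

definition cycle_edges :: "nat \<Rightarrow> (nat \<times> nat) set" where
  "cycle_edges n = path_edges n \<union> {(n, 1)}"

end

theory Submission
  imports Defs
begin

text \<open>The edge ideal I(G) consists of the polynomials each of whose monomials contains an edge.
  If A is an independent set whose neighbourhood N(A) is a vertex cover, then (I : x^A) is the
  prime ideal generated by the variables of N(A). Conversely, if (I : f) is prime with f
  homogeneous of degree k, some monomial of f lies outside I, and its support B has at most k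
  elements and N(B) is a vertex cover. Hence v(G) is the least size of a vertex set whose
  neighbourhood covers every edge. In a graph of maximum degree 2 the neighbourhood of one vertex
  meets at most 4 edges, while every fourth vertex suffices on paths and cycles; this gives
  v(P_m) = \<lfloor>(m + 2)/4\<rfloor> and v(C_n) = \<lfloor>(n + 3)/4\<rfloor>, and the theorem
  is the identity \<lfloor>(n + 3)/4\<rfloor> = \<lfloor>(n - 1)/4\<rfloor> + 1.\<close>

lemma keys_add_nat:
  "Poly_Mapping.keys (m1 + m2 :: nat \<Rightarrow>\<^sub>0 nat) = Poly_Mapping.keys m1 \<union> Poly_Mapping.keys m2"
  by (auto simp: in_keys_iff lookup_add)

lemma keys_single_one_mult:
  "Poly_Mapping.keys (Poly_Mapping.single s 1 * f :: 'a::semiring_1 mpoly) = (+) s ` Poly_Mapping.keys f"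
proof
  show "Poly_Mapping.keys (Poly_Mapping.single s 1 * f) \<subseteq> (+) s ` Poly_Mapping.keys f"
    using keys_mult[of "Poly_Mapping.single s 1" f] by auto
  have "Poly_Mapping.lookup (Poly_Mapping.single s 1 * f) (s + u) = Poly_Mapping.lookup f u" for u
    by (simp add: lookup_mult lookup_single when_mult Sum_any_right_distrib)
  then show "(+) s ` Poly_Mapping.keys f \<subseteq> Poly_Mapping.keys (Poly_Mapping.single s 1 * f)"
    by (auto simp: in_keys_iff)
qed

lemma Var_mult_Var:
  "Var i * Var j = (Poly_Mapping.single (Poly_Mapping.single i 1 + Poly_Mapping.single j 1) 1 :: 'a::field mpoly)"
  by (simp add: Var_def mult_single)

lemma polyring_single:
  "Poly_Mapping.keys m \<subseteq> {1..n} \<Longrightarrow> (Poly_Mapping.single m c :: 'a::field mpoly) \<in> polyring n"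
  unfolding polyring_def by auto

lemma Var_in_polyring: "c \<in> {1..n} \<Longrightarrow> (Var c :: 'a::field mpoly) \<in> polyring n"
  unfolding Var_def by (rule polyring_single) auto

lemma polyring_mult: "p \<in> polyring n \<Longrightarrow> q \<in> polyring n \<Longrightarrow> (p * q :: 'a::field mpoly) \<in> polyring n"
  unfolding polyring_def using keys_mult[of p q] by (force simp: keys_add_nat)

lemma polyring_add: "p \<in> polyring n \<Longrightarrow> q \<in> polyring n \<Longrightarrow> (p + q :: 'a::field mpoly) \<in> polyring n"
  unfolding polyring_def using keys_add[of p q] by blast

lemma ideal_sum:
  assumes "is_ideal n J" "finite S" "\<And>x. x \<in> S \<Longrightarrow> g x \<in> J"
  shows "sum g S \<in> J"
  using assms(2,3) by induction (use assms(1) in \<open>auto simp: is_ideal_def\<close>)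

lemma colon_eq_polyring:
  "is_ideal n I \<Longrightarrow> f \<in> I \<Longrightarrow> colon n I f = polyring n"
  unfolding colon_def is_ideal_def by auto

section \<open>Monomial ideals\<close>

definition monomial_ideal :: "nat \<Rightarrow> ((nat \<Rightarrow>\<^sub>0 nat) \<Rightarrow> bool) \<Rightarrow> 'a::field mpoly set" where
  "monomial_ideal n Q = {p \<in> polyring n. \<forall>m \<in> Poly_Mapping.keys p. Q m}"

definition upclosed :: "((nat \<Rightarrow>\<^sub>0 nat) \<Rightarrow> bool) \<Rightarrow> bool" where
  "upclosed Q \<longleftrightarrow> (\<forall>m m'. Q m \<longrightarrow> Q (m + m'))"

lemma monomial_ideal_diff:
  "p \<in> monomial_ideal n Q \<Longrightarrow> q \<in> monomial_ideal n Q \<Longrightarrow> p - q \<in> monomial_ideal n Q"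
  unfolding monomial_ideal_def polyring_def using keys_diff[of p q] by blast

lemma is_ideal_monomial_ideal:
  assumes "upclosed Q"
  shows "is_ideal n (monomial_ideal n Q)"
proof -
  have "r * p \<in> monomial_ideal n Q" if "r \<in> polyring n" "p \<in> monomial_ideal n Q" for r p
  proof -
    have "Q m" if "m \<in> Poly_Mapping.keys (r * p)" for m
    proof -
      obtain a b where "m = a + b" "b \<in> Poly_Mapping.keys p"
        using \<open>m \<in> _\<close> keys_mult[of r p] by blast
      then have "Q (b + a)"
        using \<open>p \<in> _\<close> assms unfolding monomial_ideal_def upclosed_def by blast
      then show "Q m"
        by (simp add: \<open>m = a + b\<close> add.commute)
    qed
    with that show ?thesis
      unfolding monomial_ideal_def by (auto intro: polyring_mult)
  qed
  moreover have "p + q \<in> monomial_ideal n Q" if "p \<in> monomial_ideal n Q" "q \<in> monomial_ideal n Q" for p q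
    using that keys_add[of p q] polyring_add unfolding monomial_ideal_def by blast
  moreover have "0 \<in> monomial_ideal n Q" "monomial_ideal n Q \<subseteq> polyring n"
    by (auto simp: monomial_ideal_def polyring_def)
  ultimately show ?thesis
    unfolding is_ideal_def by blast
qed

lemma colon_monomial_ideal_monomial:
  assumes "Poly_Mapping.keys M \<subseteq> {1..n}"
  shows "colon n (monomial_ideal n Q) (Poly_Mapping.single M 1)
       = (monomial_ideal n (\<lambda>u. Q (M + u)) :: 'a::field mpoly set)"
proof -
  have "Poly_Mapping.single M 1 \<in> (polyring n :: 'a mpoly set)"
    using assms by (rule polyring_single)
  then show ?thesis
    unfolding colon_def monomial_ideal_def
    by (auto simp: mult.commute[of _ "Poly_Mapping.single M 1"] keys_single_one_mult intro: polyring_mult)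
qed

definition meets :: "nat set \<Rightarrow> (nat \<Rightarrow>\<^sub>0 nat) \<Rightarrow> bool" where
  "meets C m \<longleftrightarrow> Poly_Mapping.keys m \<inter> C \<noteq> {}"

definition drop_monomials :: "((nat \<Rightarrow>\<^sub>0 nat) \<Rightarrow> bool) \<Rightarrow> 'a::zero mpoly \<Rightarrow> 'a mpoly" where
  "drop_monomials Q p = Poly_Mapping.mapp (\<lambda>m c. if Q m then 0 else c) p"

lemma lookup_drop_monomials:
  "Poly_Mapping.lookup (drop_monomials Q p) m = (if Q m then 0 else Poly_Mapping.lookup p m)"
  by (auto simp: drop_monomials_def lookup_mapp when_def in_keys_iff)

lemma keys_drop_monomials:
  "Poly_Mapping.keys (drop_monomials Q p) = {m \<in> Poly_Mapping.keys p. \<not> Q m}"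
  by (auto simp: in_keys_iff lookup_drop_monomials split: if_splits)

lemma keys_minus_drop_monomials:
  "Poly_Mapping.keys (p - drop_monomials Q p :: 'a::ab_group_add mpoly) = {m \<in> Poly_Mapping.keys p. Q m}"
  by (auto simp: in_keys_iff lookup_minus lookup_drop_monomials split: if_splits)

text \<open>\<^term>\<open>monomial_ideal n (meets C)\<close> is the ideal generated by the variables x_c, c \<in> C.
  If a and b lie outside it, the parts a', b' of a and b whose monomials avoid C are nonzero, and
  a' b' lies in the ideal although none of its monomials meets C.\<close>
lemma prime_ideal_monomial_ideal_meets:
  "prime_ideal n (monomial_ideal n (meets C) :: 'a::field mpoly set)"
proof -
  let ?P = "monomial_ideal n (meets C) :: 'a mpoly set"
  have ideal: "is_ideal n ?P"
    by (rule is_ideal_monomial_ideal) (auto simp: upclosed_def meets_def keys_add_nat)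
  have "1 \<notin> ?P"
    by (simp add: monomial_ideal_def meets_def)
  moreover have "(1 :: 'a mpoly) \<in> polyring n"
    by (simp add: polyring_def)
  moreover have "a \<in> ?P \<or> b \<in> ?P" if ab: "a \<in> polyring n" "b \<in> polyring n" "a * b \<in> ?P" for a b
  proof (rule ccontr)
    assume "\<not> (a \<in> ?P \<or> b \<in> ?P)"
    define a' b' where "a' = drop_monomials (meets C) a" and "b' = drop_monomials (meets C) b"
    have "a' \<noteq> 0" "b' \<noteq> 0"
      using \<open>\<not> (a \<in> ?P \<or> b \<in> ?P)\<close> ab
      unfolding a'_def b'_def monomial_ideal_def
      by (auto simp flip: keys_eq_empty simp: keys_drop_monomials)
    have a'_ring: "a' \<in> polyring n"
      using ab(1) by (auto simp: a'_def polyring_def keys_drop_monomials)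
    have "a - a' \<in> ?P" "b - b' \<in> ?P"
      using ab unfolding a'_def b'_def monomial_ideal_def polyring_def
      by (auto simp: keys_minus_drop_monomials)
    then have "a * b - (a - a') * b - a' * (b - b') \<in> ?P"
      using ideal ab a'_ring monomial_ideal_diff
      unfolding is_ideal_def by (metis mult.commute)
    moreover have "a * b - (a - a') * b - a' * (b - b') = a' * b'"
      by (simp add: algebra_simps)
    ultimately have "a' * b' \<in> ?P" by simp
    moreover have "\<not> meets C m" if m: "m \<in> Poly_Mapping.keys (a' * b')" for m
    proof -
      obtain x y where "m = x + y" "x \<in> Poly_Mapping.keys a'" "y \<in> Poly_Mapping.keys b'"
        using m keys_mult[of a' b'] by blast
      then show ?thesis
        by (auto simp: a'_def b'_def keys_drop_monomials meets_def keys_add_nat)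
    qed
    ultimately have "Poly_Mapping.keys (a' * b') = {}"
      unfolding monomial_ideal_def by blast
    with \<open>a' \<noteq> 0\<close> \<open>b' \<noteq> 0\<close> show False by simp
  qed
  ultimately show ?thesis
    unfolding prime_ideal_def using ideal by blast
qed

section \<open>Edge ideals and the v-number\<close>

definition contains_edge :: "(nat \<times> nat) set \<Rightarrow> (nat \<Rightarrow>\<^sub>0 nat) \<Rightarrow> bool" where
  "contains_edge E m \<longleftrightarrow> (\<exists>(i, j) \<in> E. i \<in> Poly_Mapping.keys m \<and> j \<in> Poly_Mapping.keys m)"

definition simple_graph_on :: "nat \<Rightarrow> (nat \<times> nat) set \<Rightarrow> bool" where
  "simple_graph_on n E \<longleftrightarrow> (\<forall>(i, j) \<in> E. i \<noteq> j \<and> i \<in> {1..n} \<and> j \<in> {1..n})"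

lemma upclosed_contains_edge: "upclosed (contains_edge E)"
  by (auto simp: upclosed_def contains_edge_def keys_add_nat)

lemma Var_mult_Var_in_monomial_ideal:
  assumes "simple_graph_on n E" "(i, j) \<in> E"
  shows "Var i * Var j \<in> (monomial_ideal n (contains_edge E) :: 'a::field mpoly set)"
proof -
  have "Poly_Mapping.keys (Poly_Mapping.single i 1 + Poly_Mapping.single j (1::nat)) = {i, j}"
    by (auto simp: keys_add_nat)
  with assms show ?thesis
    by (auto simp: Var_mult_Var monomial_ideal_def contains_edge_def polyring_def simple_graph_on_def)
qed

lemma monomial_mem_if_contains_edge:
  assumes "is_ideal n J" "{Var i * Var j | i j. (i, j) \<in> E} \<subseteq> (J :: 'a::field mpoly set)"
    and "simple_graph_on n E" "contains_edge E m" "Poly_Mapping.keys m \<subseteq> {1..n}"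
  shows "Poly_Mapping.single m c \<in> J"
proof -
  obtain i j where ij: "(i, j) \<in> E" "i \<in> Poly_Mapping.keys m" "j \<in> Poly_Mapping.keys m"
    using assms(4) unfolding contains_edge_def by auto
  have "i \<noteq> j"
    using assms(3) ij(1) unfolding simple_graph_on_def by auto
  define s where "s = Poly_Mapping.single i 1 + Poly_Mapping.single j (1::nat)"
  have m: "m = (m - s) + s"
    using ij \<open>i \<noteq> j\<close> unfolding s_def
    by (intro poly_mapping_eqI) (auto simp: lookup_add lookup_minus lookup_single when_def in_keys_iff)
  then have "Poly_Mapping.keys (m - s) \<subseteq> {1..n}"
    using assms(5) by (metis keys_add_nat le_supE)
  then have "Poly_Mapping.single (m - s) c \<in> polyring n"
    by (rule polyring_single)
  moreover have "Var i * Var j \<in> J"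
    using assms(2) ij(1) by blast
  ultimately have "Poly_Mapping.single (m - s) c * (Var i * Var j) \<in> J"
    using assms(1) unfolding is_ideal_def by blast
  then show ?thesis
    by (subst m) (simp add: Var_mult_Var mult_single s_def)
qed

lemma edge_ideal_eq_monomial_ideal:
  assumes "simple_graph_on n E"
  shows "(edge_ideal n E :: 'a::field mpoly set) = monomial_ideal n (contains_edge E)"
proof
  have "{Var i * Var j | i j. (i, j) \<in> E} \<subseteq> (monomial_ideal n (contains_edge E) :: 'a mpoly set)"
    using Var_mult_Var_in_monomial_ideal[OF assms] by blast
  then show "edge_ideal n E \<subseteq> (monomial_ideal n (contains_edge E) :: 'a mpoly set)"
    unfolding edge_ideal_def ideal_gen_def
    using is_ideal_monomial_ideal[OF upclosed_contains_edge] by blast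
next
  show "monomial_ideal n (contains_edge E) \<subseteq> (edge_ideal n E :: 'a mpoly set)"
  proof
    fix p :: "'a mpoly"
    assume p: "p \<in> monomial_ideal n (contains_edge E)"
    have "p \<in> J" if J: "is_ideal n J" "{Var i * Var j | i j. (i, j) \<in> E} \<subseteq> J" for J
    proof -
      have "p = (\<Sum>m\<in>Poly_Mapping.keys p. Poly_Mapping.single m (Poly_Mapping.lookup p m))"
        by (rule poly_mapping_eqI) (auto simp: lookup_sum lookup_single when_def in_keys_iff)
      also have "\<dots> \<in> J"
        using p by (intro ideal_sum[OF J(1)] monomial_mem_if_contains_edge[OF J assms])
          (auto simp: monomial_ideal_def polyring_def)
      finally show ?thesis .
    qed
    then show "p \<in> edge_ideal n E"
      unfolding edge_ideal_def ideal_gen_def by blast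
  qed
qed

definition adj :: "(nat \<times> nat) set \<Rightarrow> nat \<Rightarrow> nat \<Rightarrow> bool" where
  "adj E a b \<longleftrightarrow> (a, b) \<in> E \<or> (b, a) \<in> E"

definition nbhd :: "(nat \<times> nat) set \<Rightarrow> nat set \<Rightarrow> nat set" where
  "nbhd E B = {c. \<exists>b \<in> B. adj E c b}"

definition vertex_cover :: "(nat \<times> nat) set \<Rightarrow> nat set \<Rightarrow> bool" where
  "vertex_cover E C \<longleftrightarrow> (\<forall>(i, j) \<in> E. i \<in> C \<or> j \<in> C)"

definition independent :: "(nat \<times> nat) set \<Rightarrow> nat set \<Rightarrow> bool" where
  "independent E A \<longleftrightarrow> (\<forall>a \<in> A. \<forall>a' \<in> A. \<not> adj E a a')"

lemma contains_edge_add_iff: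
  assumes "independent E (Poly_Mapping.keys M)" "vertex_cover E (nbhd E (Poly_Mapping.keys M))"
  shows "contains_edge E (M + u) \<longleftrightarrow> meets (nbhd E (Poly_Mapping.keys M)) u"
proof
  assume "meets (nbhd E (Poly_Mapping.keys M)) u"
  then show "contains_edge E (M + u)"
    by (auto simp: meets_def nbhd_def adj_def contains_edge_def keys_add_nat)
next
  assume "contains_edge E (M + u)"
  then obtain i j where ij: "(i, j) \<in> E" "i \<in> Poly_Mapping.keys M \<union> Poly_Mapping.keys u"
    "j \<in> Poly_Mapping.keys M \<union> Poly_Mapping.keys u"
    by (auto simp: contains_edge_def keys_add_nat)
  then consider "i \<in> Poly_Mapping.keys M" "j \<in> Poly_Mapping.keys u"
    | "j \<in> Poly_Mapping.keys M" "i \<in> Poly_Mapping.keys u"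
    | "i \<in> Poly_Mapping.keys u" "j \<in> Poly_Mapping.keys u"
    using assms(1) unfolding independent_def adj_def by blast
  then show "meets (nbhd E (Poly_Mapping.keys M)) u"
    using ij(1) assms(2) unfolding meets_def nbhd_def adj_def vertex_cover_def by cases blast+
qed

lemma indicator_monomial:
  assumes "finite A"
  shows "Poly_Mapping.keys (\<Sum>a\<in>A. Poly_Mapping.single a (1::nat)) = A"
    and "mon_deg (\<Sum>a\<in>A. Poly_Mapping.single a (1::nat)) = card A"
proof -
  have lookup: "Poly_Mapping.lookup (\<Sum>a\<in>A. Poly_Mapping.single a (1::nat)) i = (if i \<in> A then 1 else 0)" for i
    using assms by (simp add: lookup_sum lookup_single when_def)
  then show keys: "Poly_Mapping.keys (\<Sum>a\<in>A. Poly_Mapping.single a (1::nat)) = A"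
    by (auto simp: in_keys_iff split: if_splits)
  have "mon_deg (\<Sum>a\<in>A. Poly_Mapping.single a (1::nat)) = (\<Sum>i\<in>A. 1)"
    unfolding mon_deg_def keys by (rule sum.cong) (use lookup in auto)
  then show "mon_deg (\<Sum>a\<in>A. Poly_Mapping.single a (1::nat)) = card A"
    by simp
qed

lemma colon_edge_ideal_independent:
  assumes "simple_graph_on n E" "A \<subseteq> {1..n}" "independent E A" "vertex_cover E (nbhd E A)"
  defines "f \<equiv> Poly_Mapping.single (\<Sum>a\<in>A. Poly_Mapping.single a 1) 1"
  shows "f \<in> homog_comp n (card A)"
    and "colon n (edge_ideal n E) f = (monomial_ideal n (meets (nbhd E A)) :: 'a::field mpoly set)"
proof -
  have "finite A"
    using assms(2) finite_subset by blast
  note M = indicator_monomial[OF this]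
  then show "f \<in> homog_comp n (card A)"
    using assms(2) by (simp add: f_def homog_comp_def polyring_single)
  have "colon n (edge_ideal n E) f
      = monomial_ideal n (\<lambda>u. contains_edge E ((\<Sum>a\<in>A. Poly_Mapping.single a 1) + u))"
    unfolding f_def edge_ideal_eq_monomial_ideal[OF assms(1)]
    by (rule colon_monomial_ideal_monomial) (use M assms(2) in simp)
  also have "\<dots> = monomial_ideal n (meets (nbhd E A))"
    using contains_edge_add_iff[of E "\<Sum>a\<in>A. Poly_Mapping.single a 1"] M assms(3,4) by simp
  finally show "colon n (edge_ideal n E) f = (monomial_ideal n (meets (nbhd E A)) :: 'a mpoly set)" .
qed

lemma card_keys_le_mon_deg: "card (Poly_Mapping.keys m) \<le> mon_deg m"
  unfolding mon_deg_def card_eq_sum by (rule sum_mono) (simp add: in_keys_iff Suc_le_eq)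

lemma Var_mult_in_edge_ideal_imp_nbhd:
  assumes "simple_graph_on n E" "Var c * f \<in> (monomial_ideal n (contains_edge E) :: 'a::field mpoly set)"
    and "u \<in> Poly_Mapping.keys f" "\<not> contains_edge E u"
  shows "c \<in> nbhd E (Poly_Mapping.keys u)"
proof -
  have "Poly_Mapping.single c 1 + u \<in> Poly_Mapping.keys (Var c * f)"
    using assms(3) by (simp add: Var_def keys_single_one_mult)
  then have "contains_edge E (Poly_Mapping.single c 1 + u)"
    using assms(2) unfolding monomial_ideal_def by blast
  then obtain a b where ab: "(a, b) \<in> E" "a \<in> insert c (Poly_Mapping.keys u)" "b \<in> insert c (Poly_Mapping.keys u)"
    by (auto simp: contains_edge_def keys_add_nat)
  moreover have "a \<noteq> b"
    using assms(1) ab(1) unfolding simple_graph_on_def by auto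
  moreover have "\<not> (a \<in> Poly_Mapping.keys u \<and> b \<in> Poly_Mapping.keys u)"
    using assms(4) ab(1) unfolding contains_edge_def by blast
  ultimately show ?thesis
    unfolding nbhd_def adj_def by auto
qed

text \<open>For every edge x_i x_j one of x_i, x_j lies in the prime ideal (I : f), which forces it to
  be a neighbour of the support of a monomial of f outside I.\<close>
lemma prime_colon_edge_ideal_imp_nbhd_cover:
  assumes "simple_graph_on n E" "f \<in> homog_comp n k"
    and "prime_ideal n (colon n (edge_ideal n E) f :: 'a::field mpoly set)"
  shows "\<exists>B \<subseteq> {1..n}. card B \<le> k \<and> vertex_cover E (nbhd E B)"
proof -
  let ?I = "monomial_ideal n (contains_edge E) :: 'a mpoly set"
  have I: "is_ideal n ?I"
    by (rule is_ideal_monomial_ideal[OF upclosed_contains_edge])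
  have prime: "prime_ideal n (colon n ?I f)"
    using assms(3) by (simp add: edge_ideal_eq_monomial_ideal[OF assms(1)])
  have f: "f \<in> polyring n" "\<forall>m \<in> Poly_Mapping.keys f. mon_deg m = k"
    using assms(2) unfolding homog_comp_def by auto
  have "f \<notin> ?I"
    using prime colon_eq_polyring[OF I] unfolding prime_ideal_def by blast
  then obtain u where u: "u \<in> Poly_Mapping.keys f" "\<not> contains_edge E u"
    using f(1) unfolding monomial_ideal_def by blast
  have "Poly_Mapping.keys u \<subseteq> {1..n}"
    using f(1) u(1) unfolding polyring_def by blast
  moreover have "card (Poly_Mapping.keys u) \<le> k"
    using card_keys_le_mon_deg[of u] f(2) u(1) by simp
  moreover have "i \<in> nbhd E (Poly_Mapping.keys u) \<or> j \<in> nbhd E (Poly_Mapping.keys u)"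
    if ij: "(i, j) \<in> E" for i j
  proof -
    have vars: "Var i \<in> (polyring n :: 'a mpoly set)" "Var j \<in> (polyring n :: 'a mpoly set)"
      using assms(1) ij unfolding simple_graph_on_def by (auto intro!: Var_in_polyring)
    have "f * (Var i * Var j) \<in> ?I"
      using I f(1) Var_mult_Var_in_monomial_ideal[OF assms(1) ij] unfolding is_ideal_def by blast
    then have "Var i * Var j \<in> colon n ?I f"
      using vars polyring_mult unfolding colon_def by (auto simp: mult.commute)
    then have "Var i \<in> colon n ?I f \<or> Var j \<in> colon n ?I f"
      using prime vars unfolding prime_ideal_def by blast
    then show ?thesis
      unfolding colon_def using Var_mult_in_edge_ideal_imp_nbhd[OF assms(1) _ u] by blast
  qed
  ultimately show ?thesis
    unfolding vertex_cover_def by blast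
qed

lemma vnumber_edge_ideal_eqI:
  assumes "simple_graph_on n E" "A \<subseteq> {1..n}" "independent E A" "vertex_cover E (nbhd E A)"
    and "card A \<le> K" "\<And>B. B \<subseteq> {1..n} \<Longrightarrow> vertex_cover E (nbhd E B) \<Longrightarrow> K \<le> card B"
  shows "vnumber n (edge_ideal n E :: 'a::field mpoly set) = K"
  unfolding vnumber_def
proof (rule Least_equality)
  have "card A = K"
    using assms(2,4,5,6) by (simp add: le_antisym)
  then show "\<exists>f \<in> homog_comp n K. \<exists>P \<in> Ass n (edge_ideal n E :: 'a mpoly set). colon n (edge_ideal n E) f = P"
    using colon_edge_ideal_independent[OF assms(1-4)] prime_ideal_monomial_ideal_meets
    unfolding Ass_def homog_comp_def by blast
next
  fix k
  assume "\<exists>f \<in> homog_comp n k. \<exists>P \<in> Ass n (edge_ideal n E :: 'a mpoly set). colon n (edge_ideal n E) f = P"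
  then obtain f where "f \<in> homog_comp n k" "prime_ideal n (colon n (edge_ideal n E) f :: 'a mpoly set)"
    unfolding Ass_def by fastforce
  then show "K \<le> k"
    using prime_colon_edge_ideal_imp_nbhd_cover[OF assms(1)] assms(6) le_trans by blast
qed

section \<open>Covering edges by neighbourhoods\<close>

definition incident_edges :: "(nat \<times> nat) set \<Rightarrow> nat \<Rightarrow> (nat \<times> nat) set" where
  "incident_edges E c = {e \<in> E. fst e = c \<or> snd e = c}"

lemma nbhd_singleton_subset:
  "nbhd E {c} \<subseteq> (\<lambda>e. if fst e = c then snd e else fst e) ` incident_edges E c"
proof
  fix b
  assume "b \<in> nbhd E {c}"
  then have "(c, b) \<in> E \<or> (b, c) \<in> E"
    by (auto simp: nbhd_def adj_def)
  then show "b \<in> (\<lambda>e. if fst e = c then snd e else fst e) ` incident_edges E c"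
  proof
    assume "(c, b) \<in> E"
    then show ?thesis
      unfolding incident_edges_def by (intro image_eqI[of _ _ "(c, b)"]) auto
  next
    assume "(b, c) \<in> E"
    then show ?thesis
      unfolding incident_edges_def by (intro image_eqI[of _ _ "(b, c)"]) auto
  qed
qed

lemma nbhd_mono: "E \<subseteq> E' \<Longrightarrow> nbhd E B \<subseteq> nbhd E' B"
  unfolding nbhd_def adj_def by blast

text \<open>Each of the at most d neighbours of a vertex b is incident to at most d edges.\<close>
lemma card_edges_le_if_nbhd_cover:
  assumes "finite E" "\<And>c. card (incident_edges E c) \<le> d"
    and "finite B" "vertex_cover E (nbhd E B)"
  shows "card E \<le> d * d * card B"
proof -
  have nbhd_finite: "finite (nbhd E {b})" and nbhd_card: "card (nbhd E {b}) \<le> d" for b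
  proof -
    have fin: "finite (incident_edges E b)"
      using assms(1) by (simp add: incident_edges_def)
    then show "finite (nbhd E {b})"
      by (rule finite_surj[OF _ nbhd_singleton_subset])
    have "card (nbhd E {b}) \<le> card ((\<lambda>e. if fst e = b then snd e else fst e) ` incident_edges E b)"
      using fin by (intro card_mono nbhd_singleton_subset finite_imageI)
    also have "\<dots> \<le> card (incident_edges E b)"
      by (rule card_image_le[OF fin])
    finally show "card (nbhd E {b}) \<le> d"
      using assms(2)[of b] by linarith
  qed
  have "E \<subseteq> (\<Union>b\<in>B. \<Union>c\<in>nbhd E {b}. incident_edges E c)"
  proof
    fix e
    assume "e \<in> E"
    then obtain v where "v \<in> nbhd E B" "v = fst e \<or> v = snd e"
      using assms(4) unfolding vertex_cover_def by fastforce
    then obtain b where "b \<in> B" "v \<in> nbhd E {b}"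
      unfolding nbhd_def by blast
    with \<open>e \<in> E\<close> \<open>v = fst e \<or> v = snd e\<close> show "e \<in> (\<Union>b\<in>B. \<Union>c\<in>nbhd E {b}. incident_edges E c)"
      unfolding incident_edges_def by blast
  qed
  then have "card E \<le> card (\<Union>b\<in>B. \<Union>c\<in>nbhd E {b}. incident_edges E c)"
    by (intro card_mono) (auto simp: incident_edges_def assms(1,3) nbhd_finite)
  also have "\<dots> \<le> (\<Sum>b\<in>B. card (\<Union>c\<in>nbhd E {b}. incident_edges E c))"
    by (rule card_UN_le[OF assms(3)])
  also have "\<dots> \<le> (\<Sum>b\<in>B. \<Sum>c\<in>nbhd E {b}. card (incident_edges E c))"
    by (intro sum_mono card_UN_le nbhd_finite)
  also have "\<dots> \<le> (\<Sum>b\<in>B. d * d)"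
  proof (rule sum_mono)
    fix b
    have "(\<Sum>c\<in>nbhd E {b}. card (incident_edges E c)) \<le> card (nbhd E {b}) * d"
      using sum_bounded_above[of "nbhd E {b}" "\<lambda>c. card (incident_edges E c)" d, OF assms(2)] by simp
    also have "\<dots> \<le> d * d"
      using nbhd_card by simp
    finally show "(\<Sum>c\<in>nbhd E {b}. card (incident_edges E c)) \<le> d * d" .
  qed
  finally show ?thesis
    by (simp add: mult.commute)
qed

section \<open>Paths and cycles\<close>

lemma adj_path_edges_iff:
  "adj (path_edges m) a b \<longleftrightarrow> 1 \<le> a \<and> 1 \<le> b \<and> a \<le> m \<and> b \<le> m \<and> (b = a + 1 \<or> a = b + 1)"
  unfolding adj_def path_edges_def by auto

lemma path_edges_eq_image: "path_edges m = (\<lambda>i. (i, i + 1)) ` {1..<m}"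
  unfolding path_edges_def by auto

lemma card_path_edges: "card (path_edges m) = m - 1"
  by (simp add: path_edges_eq_image card_image inj_on_def)

lemma card_incident_path_edges: "card (incident_edges (path_edges m) c) \<le> 2"
proof -
  have "incident_edges (path_edges m) c \<subseteq> {(c - 1, c), (c, c + 1)}"
    unfolding incident_edges_def path_edges_def by auto
  then have "card (incident_edges (path_edges m) c) \<le> card {(c - 1, c), (c, c + 1)}"
    by (rule card_mono[rotated]) simp
  also have "\<dots> \<le> 2"
    by (simp add: card_insert_le_m1)
  finally show ?thesis .
qed

lemma card_cycle_edges:
  assumes "n \<ge> 2"
  shows "card (cycle_edges n) = n"
proof -
  have "(n, 1) \<notin> path_edges n" "finite (path_edges n)"
    using assms by (auto simp: path_edges_eq_image)
  then show ?thesis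
    using assms by (simp add: cycle_edges_def card_path_edges)
qed

lemma card_incident_cycle_edges:
  assumes "n \<ge> 3"
  shows "card (incident_edges (cycle_edges n) c) \<le> 2"
proof -
  have "incident_edges (cycle_edges n) c
      \<subseteq> {if c = 1 then (n, 1) else (c - 1, c), if c = n then (n, 1) else (c, c + 1)}"
    using assms unfolding incident_edges_def cycle_edges_def path_edges_def by auto
  then have "card (incident_edges (cycle_edges n) c)
      \<le> card {if c = 1 then (n, 1) else (c - 1, c), if c = n then (n, 1) else (c, c + 1)}"
    by (rule card_mono[rotated]) simp
  also have "\<dots> \<le> 2"
    by (simp add: card_insert_le_m1)
  finally show ?thesis .
qed

lemma vertex_cover_path_edges_iff:
  "vertex_cover (path_edges m) C \<longleftrightarrow> (\<forall>i. 1 \<le> i \<longrightarrow> i < m \<longrightarrow> i \<in> C \<or> i + 1 \<in> C)"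
  unfolding vertex_cover_def path_edges_def by auto

lemma vertex_cover_cycle_edges_iff:
  "vertex_cover (cycle_edges n) C \<longleftrightarrow> vertex_cover (path_edges n) C \<and> (n \<in> C \<or> 1 \<in> C)"
  unfolding vertex_cover_def cycle_edges_def by auto

lemma adj_cycle_edges_iff:
  "adj (cycle_edges n) a b \<longleftrightarrow> adj (path_edges n) a b \<or> (a = n \<and> b = 1) \<or> (a = 1 \<and> b = n)"
  unfolding adj_def cycle_edges_def by auto

definition every_fourth :: "nat \<Rightarrow> nat \<Rightarrow> nat \<Rightarrow> nat set" where
  "every_fourth r m K = (\<lambda>j. min (4 * j + r) m) ` {..<K}"

lemma every_fourth_subset: "1 \<le> r \<Longrightarrow> 4 * K \<le> m + 3 \<Longrightarrow> every_fourth r m K \<subseteq> {1..m}"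
  unfolding every_fourth_def by auto

lemma card_every_fourth_le: "card (every_fourth r m K) \<le> K"
  unfolding every_fourth_def using card_image_le[of "{..<K}"] by simp

text \<open>Only the last vertex can be moved back to m, and it then stays at distance at least 3
  from its predecessor.\<close>
lemma every_fourth_not_adjacent:
  assumes "r \<le> 3" "4 * K \<le> m + 3" "a \<in> every_fourth r m K" "a' \<in> every_fourth r m K"
  shows "a \<noteq> a' + 1"
proof -
  obtain j j' where j: "j < K" "j' < K" "a = min (4 * j + r) m" "a' = min (4 * j' + r) m"
    using assms(3,4) unfolding every_fourth_def by blast
  show ?thesis
  proof (cases "j' < j")
    case True
    then have "4 * j' + r + 4 \<le> 4 * j + r" "4 * j' + r + 2 \<le> m"
      using assms(1,2) j(1) by linarith+
    then show ?thesis
      using j(3,4) by (simp add: min_def)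
  next
    case False
    then show ?thesis
      using j(3,4) by (simp add: min_def)
  qed
qed

lemma independent_path_edges_every_fourth:
  "r \<le> 3 \<Longrightarrow> 4 * K \<le> m + 3 \<Longrightarrow> independent (path_edges m) (every_fourth r m K)"
  unfolding independent_def adj_path_edges_iff using every_fourth_not_adjacent by blast

lemma path_edge_covered_by_every_fourth:
  assumes "1 \<le> r" "r \<le> 3" "m + 2 \<le> 4 * K + r" "1 \<le> i" "i < m"
  shows "i \<in> nbhd (path_edges m) (every_fourth r m K) \<or> i + 1 \<in> nbhd (path_edges m) (every_fourth r m K)"
proof -
  define j where "j = (i + 2 - r) div 4"
  define a where "a = min (4 * j + r) m"
  have "4 * j \<le> i + 2 - r" "i + 2 - r < 4 * j + 4"
    unfolding j_def by simp_all
  with assms have "j < K" "1 \<le> a" "a \<le> m" "i \<le> a + 1" "a \<le> i + 2"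
    unfolding a_def by (auto simp: min_def)
  then have "a \<in> every_fourth r m K" "adj (path_edges m) i a \<or> adj (path_edges m) (i + 1) a"
    using assms(4,5) unfolding every_fourth_def a_def adj_path_edges_iff by auto
  then show ?thesis
    unfolding nbhd_def by blast
qed

lemma vnumber_path:
  "vnumber m (edge_ideal m (path_edges m) :: 'a::field mpoly set) = (m + 2) div 4"
proof (rule vnumber_edge_ideal_eqI[where A = "every_fourth 3 m ((m + 2) div 4)"])
  show "simple_graph_on m (path_edges m)"
    unfolding simple_graph_on_def path_edges_def by auto
  show "every_fourth 3 m ((m + 2) div 4) \<subseteq> {1..m}"
    by (rule every_fourth_subset) auto
  show "independent (path_edges m) (every_fourth 3 m ((m + 2) div 4))"
    by (rule independent_path_edges_every_fourth) auto
  have "m + 2 \<le> 4 * ((m + 2) div 4) + 3"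
    by presburger
  then show "vertex_cover (path_edges m) (nbhd (path_edges m) (every_fourth 3 m ((m + 2) div 4)))"
    unfolding vertex_cover_path_edges_iff using path_edge_covered_by_every_fourth by simp
  show "card (every_fourth 3 m ((m + 2) div 4)) \<le> (m + 2) div 4"
    by (rule card_every_fourth_le)
next
  fix B
  assume "B \<subseteq> {1..m}" "vertex_cover (path_edges m) (nbhd (path_edges m) B)"
  then have "card (path_edges m) \<le> 2 * 2 * card B"
    by (intro card_edges_le_if_nbhd_cover card_incident_path_edges)
      (auto simp: path_edges_eq_image finite_subset)
  then show "(m + 2) div 4 \<le> card B"
    by (simp add: card_path_edges)
qed

lemma vnumber_cycle:
  assumes "n \<ge> 3"
  shows "vnumber n (edge_ideal n (cycle_edges n) :: 'a::field mpoly set) = (n + 3) div 4"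
proof (rule vnumber_edge_ideal_eqI[where A = "every_fourth 2 n ((n + 3) div 4)"])
  let ?A = "every_fourth 2 n ((n + 3) div 4)"
  show "simple_graph_on n (cycle_edges n)"
    using assms unfolding simple_graph_on_def cycle_edges_def path_edges_def by auto
  show "?A \<subseteq> {1..n}"
    by (rule every_fourth_subset) auto
  have "1 \<notin> ?A"
    using assms unfolding every_fourth_def by auto
  then show "independent (cycle_edges n) ?A"
    using independent_path_edges_every_fourth[of 2 "(n + 3) div 4" n]
    unfolding independent_def adj_cycle_edges_iff by auto
  have "2 \<in> ?A"
    using assms unfolding every_fourth_def by (auto intro!: image_eqI[of _ _ 0])
  moreover have "adj (cycle_edges n) 1 2"
    using assms by (simp add: adj_cycle_edges_iff adj_path_edges_iff)
  ultimately have "1 \<in> nbhd (cycle_edges n) ?A"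
    unfolding nbhd_def by blast
  have "n + 2 \<le> 4 * ((n + 3) div 4) + 2"
    by presburger
  then have "vertex_cover (path_edges n) (nbhd (path_edges n) ?A)"
    unfolding vertex_cover_path_edges_iff using path_edge_covered_by_every_fourth by simp
  moreover have "nbhd (path_edges n) ?A \<subseteq> nbhd (cycle_edges n) ?A"
    by (rule nbhd_mono) (auto simp: cycle_edges_def)
  ultimately show "vertex_cover (cycle_edges n) (nbhd (cycle_edges n) ?A)"
    using \<open>1 \<in> nbhd (cycle_edges n) ?A\<close>
    unfolding vertex_cover_cycle_edges_iff vertex_cover_path_edges_iff by blast
  show "card ?A \<le> (n + 3) div 4"
    by (rule card_every_fourth_le)
next
  fix B
  assume "B \<subseteq> {1..n}" "vertex_cover (cycle_edges n) (nbhd (cycle_edges n) B)"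
  then have "card (cycle_edges n) \<le> 2 * 2 * card B"
    using assms
    by (intro card_edges_le_if_nbhd_cover card_incident_cycle_edges)
      (auto simp: cycle_edges_def path_edges_eq_image finite_subset)
  then show "(n + 3) div 4 \<le> card B"
    using assms by (simp add: card_cycle_edges)
qed

theorem proposition3p4:
  fixes n :: nat
  assumes "n \<ge> 5"
  shows "vnumber n (edge_ideal n (cycle_edges n) :: 'a::field mpoly set)
       = vnumber (n - 3) (edge_ideal (n - 3) (path_edges (n - 3)) :: 'a mpoly set) + 1"
proof -
  have "(n + 3) div 4 = (n - 3 + 2) div 4 + 1"
    using assms by simp
  then show ?thesis
    using assms by (simp add: vnumber_cycle vnumber_path)
qed

end
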